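(* Let $X$ be any topological space (no separation axioms assumed). If $X$ is an Alster space, then $X$ is totally Lindelöf.
   Context: A filter base on a set $X$ is a nonempty family $\mathcal{F}\subseteq\mathcal{P}(X)$ such that $\emptyset\notin\mathcal{F}$ and $F_0\cap F_1\in\mathcal{F}$ for all $F_0,F_1\in\mathcal{F}$. A filter base $\mathcal{F}$ is stable under countable intersections if for every countable $S\subseteq\mathcal{F}$ there is $H\in\mathcal{F}$ with $H\subseteq\bigcap S$. For $\mathcal{F}\subseteq\mathcal{P}(X)$, $ad(\mathcal{F})=\bigcap\{\overline{F}: F\in\mathcal{F}\}$. A filter base $\mathcal{F}$ on $X$ is total if every filter base $\mathcal{H}\supseteq\mathcal{F}$ on $X$ satisfies $ad(\mathcal{H})\neq\emptyset$. $X$ is totally Lindelöf if every filter base on $X$ stable under countable intersections is contained in some total filter base on $X$ stable under countable intersections. A $G_\delta$ set is a countable intersection of open sets. An Alster covering of $X$ is a family $\mathcal{G}$ of $G_\delta$ subsets of $X$ such that every compact $K\subseteq X$ is contained in some member of $\mathcal{G}$; $X$ is an Alster space if every Alster covering of $X$ has a countable subfamily covering $X$. *)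

theory Defs
  imports "HOL-Analysis.Analysis"
begin

definition filter_base :: "'a topology \<Rightarrow> 'a set set \<Rightarrow> bool" where
  "filter_base X \<F> \<longleftrightarrow>
     \<F> \<noteq> {} \<and> \<F> \<subseteq> Pow (topspace X) \<and> {} \<notin> \<F> \<and>
     (\<forall>F0\<in>\<F>. \<forall>F1\<in>\<F>. F0 \<inter> F1 \<in> \<F>)"

definition stable_countable_inter :: "'a set set \<Rightarrow> bool" where
  "stable_countable_inter \<F> \<longleftrightarrow>
     (\<forall>S. S \<subseteq> \<F> \<and> countable S \<longrightarrow> (\<exists>H\<in>\<F>. H \<subseteq> \<Inter>S))"

definition ad :: "'a topology \<Rightarrow> 'a set set \<Rightarrow> 'a set" where
  "ad X \<F> = topspace X \<inter> \<Inter>{X closure_of F | F. F \<in> \<F>}"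

definition total_filter_base :: "'a topology \<Rightarrow> 'a set set \<Rightarrow> bool" where
  "total_filter_base X \<F> \<longleftrightarrow>
     filter_base X \<F> \<and> (\<forall>\<H>. filter_base X \<H> \<and> \<F> \<subseteq> \<H> \<longrightarrow> ad X \<H> \<noteq> {})"

definition totally_lindelof :: "'a topology \<Rightarrow> bool" where
  "totally_lindelof X \<longleftrightarrow>
     (\<forall>\<F>. filter_base X \<F> \<and> stable_countable_inter \<F> \<longrightarrow>
        (\<exists>\<G>. \<F> \<subseteq> \<G> \<and> total_filter_base X \<G> \<and> stable_countable_inter \<G>))"

definition alster_covering :: "'a topology \<Rightarrow> 'a set set \<Rightarrow> bool" where
  "alster_covering X \<G> \<longleftrightarrow>
     (\<forall>G\<in>\<G>. gdelta_in X G) \<and>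
     (\<forall>K. compactin X K \<longrightarrow> (\<exists>G\<in>\<G>. K \<subseteq> G))"

definition alster_space :: "'a topology \<Rightarrow> bool" where
  "alster_space X \<longleftrightarrow>
     (\<forall>\<G>. alster_covering X \<G> \<longrightarrow>
        (\<exists>\<C>. \<C> \<subseteq> \<G> \<and> countable \<C> \<and> topspace X \<subseteq> \<Union>\<C>))"

end

theory Submission
  imports Defs
begin

text \<open>
  Given a filter base \<open>\<F>\<close> stable under countable intersections on an Alster space,
  some compact set \<open>K\<close> has the property that every \<open>G\<^sub>\<delta>\<close> set containing \<open>K\<close> meets
  every member of \<open>\<F>\<close>: otherwise the \<open>G\<^sub>\<delta>\<close> sets missing some member of \<open>\<F>\<close> form an
  Alster covering, and a countable subcover yields countably many members of \<open>\<F>\<close>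
  with empty intersection. The traces \<open>F \<inter> U\<close> of \<open>\<F>\<close> on the \<open>G\<^sub>\<delta>\<close> neighbourhoods \<open>U\<close>
  of \<open>K\<close> then form a filter base extending \<open>\<F>\<close>, again stable under countable
  intersections, and it is total: every finer filter base contains a member inside each
  open neighbourhood of the compact set \<open>K\<close>, hence adheres at a point of \<open>K\<close>.
\<close>

lemma filter_baseI:
  assumes "\<F> \<noteq> {}" "\<F> \<subseteq> Pow (topspace X)" "{} \<notin> \<F>"
    "\<And>F0 F1. F0 \<in> \<F> \<Longrightarrow> F1 \<in> \<F> \<Longrightarrow> F0 \<inter> F1 \<in> \<F>"
  shows "filter_base X \<F>"
  using assms unfolding filter_base_def by blast

lemma filter_baseD:
  assumes "filter_base X \<F>"
  shows "\<F> \<noteq> {}" "\<F> \<subseteq> Pow (topspace X)" "{} \<notin> \<F>"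
    "\<And>F0 F1. F0 \<in> \<F> \<Longrightarrow> F1 \<in> \<F> \<Longrightarrow> F0 \<inter> F1 \<in> \<F>"
  using assms unfolding filter_base_def by blast+

lemma filter_base_Int_Inter_finite:
  assumes "filter_base X \<H>" "finite \<T>" "\<T> \<subseteq> \<H>" "A \<in> \<H>"
  shows "A \<inter> \<Inter>\<T> \<in> \<H>"
  using assms(2,3)
proof (induction \<T> rule: finite_induct)
  case empty
  then show ?case using assms(4) by simp
next
  case (insert T \<T>)
  then have "A \<inter> \<Inter>\<T> \<in> \<H>" "T \<in> \<H>"
    by auto
  then have "(A \<inter> \<Inter>\<T>) \<inter> T \<in> \<H>"
    by (rule filter_baseD(4)[OF assms(1)])
  then show ?case by (simp add: Int_ac)
qed

lemma notin_adE:
  assumes "x \<in> topspace X" "x \<notin> ad X \<H>"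
  obtains V H where "openin X V" "x \<in> V" "H \<in> \<H>" "V \<inter> H = {}"
proof -
  obtain H where H: "H \<in> \<H>" "x \<notin> X closure_of H"
    using assms unfolding ad_def by blast
  then obtain V where "openin X V" "x \<in> V" "\<forall>y. y \<in> H \<longrightarrow> y \<notin> V"
    using assms(1) unfolding in_closure_of by auto
  then show thesis
    using that H(1) by blast
qed

lemma filter_base_adheres_in_compact:
  assumes "compactin X K" "filter_base X \<H>"
    and conv: "\<And>U. openin X U \<Longrightarrow> K \<subseteq> U \<Longrightarrow> \<exists>H\<in>\<H>. H \<subseteq> U"
  shows "ad X \<H> \<inter> K \<noteq> {}"
proof
  assume no_adherent: "ad X \<H> \<inter> K = {}"
  have K_sub: "K \<subseteq> topspace X"
    using assms(1) by (rule compactin_subset_topspace)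
  have "\<forall>x\<in>K. \<exists>V. \<exists>H. openin X V \<and> x \<in> V \<and> H \<in> \<H> \<and> V \<inter> H = {}"
  proof
    fix x assume "x \<in> K"
    then have "x \<in> topspace X" "x \<notin> ad X \<H>"
      using K_sub no_adherent by auto
    then show "\<exists>V H. openin X V \<and> x \<in> V \<and> H \<in> \<H> \<and> V \<inter> H = {}"
      by (metis notin_adE)
  qed
  then obtain V where "\<forall>x\<in>K. \<exists>H. openin X (V x) \<and> x \<in> V x \<and> H \<in> \<H> \<and> V x \<inter> H = {}"
    by (rule bchoice[elim_format]) blast
  then obtain H where "\<forall>x\<in>K. openin X (V x) \<and> x \<in> V x \<and> H x \<in> \<H> \<and> V x \<inter> H x = {}"
    by (rule bchoice[elim_format]) blast
  then have V: "\<And>x. x \<in> K \<Longrightarrow> openin X (V x)" "\<And>x. x \<in> K \<Longrightarrow> x \<in> V x"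
    and H: "\<And>x. x \<in> K \<Longrightarrow> H x \<in> \<H>" "\<And>x. x \<in> K \<Longrightarrow> V x \<inter> H x = {}"
    by auto
  have "\<exists>\<T>. finite \<T> \<and> \<T> \<subseteq> V ` K \<and> K \<subseteq> \<Union>\<T>"
    by (rule compactinD[OF assms(1)]) (use V in auto)
  then obtain \<T> where \<T>: "finite \<T>" "\<T> \<subseteq> V ` K" "K \<subseteq> \<Union>\<T>"
    by blast
  obtain P where P: "finite P" "P \<subseteq> K" "K \<subseteq> \<Union>(V ` P)"
    using finite_subset_image[OF \<T>(1,2)] \<T>(3) by blast
  have "openin X (\<Union>(V ` P))"
    using V P(2) by (intro openin_Union) auto
  then obtain H0 where H0: "H0 \<in> \<H>" "H0 \<subseteq> \<Union>(V ` P)"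
    using conv P(3) by blast
  have "H ` P \<subseteq> \<H>"
    using H(1) P(2) by blast
  with P(1) H0(1) have "H0 \<inter> \<Inter>(H ` P) \<in> \<H>"
    by (intro filter_base_Int_Inter_finite[OF assms(2)]) auto
  moreover have "H0 \<inter> \<Inter>(H ` P) = {}"
    using H0(2) P(2) H by blast
  ultimately show False
    using filter_baseD(3)[OF assms(2)] by simp
qed

definition gdelta_meets_filter_base :: "'a topology \<Rightarrow> 'a set \<Rightarrow> 'a set set \<Rightarrow> bool" where
  "gdelta_meets_filter_base X K \<F> \<longleftrightarrow>
     (\<forall>U F. gdelta_in X U \<and> K \<subseteq> U \<and> F \<in> \<F> \<longrightarrow> F \<inter> U \<noteq> {})"

definition gdelta_trace :: "'a topology \<Rightarrow> 'a set \<Rightarrow> 'a set set \<Rightarrow> 'a set set" where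
  "gdelta_trace X K \<F> = {F \<inter> U | F U. F \<in> \<F> \<and> gdelta_in X U \<and> K \<subseteq> U}"

lemma stable_countable_interE:
  assumes "stable_countable_inter \<F>" "S \<subseteq> \<F>" "countable S"
  obtains H where "H \<in> \<F>" "H \<subseteq> \<Inter>S"
  using assms unfolding stable_countable_inter_def by blast

lemma alster_space_gdelta_meets_filter_base:
  assumes "alster_space X" "filter_base X \<F>" "stable_countable_inter \<F>"
  obtains K where "compactin X K" "gdelta_meets_filter_base X K \<F>"
proof (rule ccontr)
  assume no_core: "\<not> thesis"
  let ?\<G> = "{U. gdelta_in X U \<and> (\<exists>F\<in>\<F>. F \<inter> U = {})}"
  have "alster_covering X ?\<G>"
    unfolding alster_covering_def
  proof (intro conjI allI impI ballI)
    fix K assume "compactin X K"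
    then have "\<not> gdelta_meets_filter_base X K \<F>"
      using no_core that by blast
    then show "\<exists>G\<in>?\<G>. K \<subseteq> G"
      unfolding gdelta_meets_filter_base_def by blast
  qed simp
  then obtain \<C> where \<C>: "\<C> \<subseteq> ?\<G>" "countable \<C>" "topspace X \<subseteq> \<Union>\<C>"
    using assms(1) unfolding alster_space_def by (elim allE impE exE conjE)
  then have "\<forall>U\<in>\<C>. \<exists>F. F \<in> \<F> \<and> F \<inter> U = {}"
    by blast
  then obtain f where f: "\<forall>U\<in>\<C>. f U \<in> \<F> \<and> f U \<inter> U = {}"
    by (rule bchoice[elim_format]) blast
  then have "f ` \<C> \<subseteq> \<F>" "countable (f ` \<C>)"
    using \<C>(2) by auto
  then obtain H where H: "H \<in> \<F>" "H \<subseteq> \<Inter>(f ` \<C>)"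
    by (rule stable_countable_interE[OF assms(3)])
  then obtain x where "x \<in> H" "x \<in> topspace X"
    using filter_baseD(2,3)[OF assms(2)] by (metis PowD all_not_in_conv subsetD)
  then show False
    using \<C>(3) H(2) f by blast
qed

lemma subset_gdelta_trace:
  assumes "\<F> \<subseteq> Pow (topspace X)" "K \<subseteq> topspace X"
  shows "\<F> \<subseteq> gdelta_trace X K \<F>"
proof
  fix F assume "F \<in> \<F>"
  moreover have "F = F \<inter> topspace X"
    using \<open>F \<in> \<F>\<close> assms(1) by blast
  ultimately show "F \<in> gdelta_trace X K \<F>"
    unfolding gdelta_trace_def using assms(2) by blast
qed

lemma filter_base_gdelta_trace:
  assumes "filter_base X \<F>" "K \<subseteq> topspace X" "gdelta_meets_filter_base X K \<F>"
  shows "filter_base X (gdelta_trace X K \<F>)"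
proof (rule filter_baseI)
  show "gdelta_trace X K \<F> \<noteq> {}"
    using subset_gdelta_trace[OF filter_baseD(2)[OF assms(1)] assms(2)] filter_baseD(1)[OF assms(1)]
    by blast
  show "gdelta_trace X K \<F> \<subseteq> Pow (topspace X)"
    using filter_baseD(2)[OF assms(1)] unfolding gdelta_trace_def by blast
  show "{} \<notin> gdelta_trace X K \<F>"
    using assms(3) unfolding gdelta_trace_def gdelta_meets_filter_base_def by blast
  fix G0 G1 assume "G0 \<in> gdelta_trace X K \<F>" "G1 \<in> gdelta_trace X K \<F>"
  then obtain F0 U0 F1 U1 where "G0 = F0 \<inter> U0" "F0 \<in> \<F>" "gdelta_in X U0" "K \<subseteq> U0"
    and "G1 = F1 \<inter> U1" "F1 \<in> \<F>" "gdelta_in X U1" "K \<subseteq> U1"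
    unfolding gdelta_trace_def by blast
  moreover from this have "F0 \<inter> F1 \<in> \<F>" "gdelta_in X (U0 \<inter> U1)"
    using filter_baseD(4)[OF assms(1)] gdelta_in_Int by auto
  ultimately have "(F0 \<inter> F1) \<inter> (U0 \<inter> U1) \<in> gdelta_trace X K \<F>"
    unfolding gdelta_trace_def by blast
  moreover have "G0 \<inter> G1 = (F0 \<inter> F1) \<inter> (U0 \<inter> U1)"
    using \<open>G0 = F0 \<inter> U0\<close> \<open>G1 = F1 \<inter> U1\<close> by blast
  ultimately show "G0 \<inter> G1 \<in> gdelta_trace X K \<F>"
    by simp
qed

lemma stable_countable_inter_gdelta_trace:
  assumes "stable_countable_inter \<F>" "K \<subseteq> topspace X"
  shows "stable_countable_inter (gdelta_trace X K \<F>)"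
  unfolding stable_countable_inter_def
proof (intro allI impI)
  fix S assume S: "S \<subseteq> gdelta_trace X K \<F> \<and> countable S"
  then have "\<forall>s\<in>S. \<exists>p. fst p \<in> \<F> \<and> gdelta_in X (snd p) \<and> K \<subseteq> snd p \<and> s = fst p \<inter> snd p"
    unfolding gdelta_trace_def by fastforce
  then obtain p where p: "\<forall>s\<in>S. fst (p s) \<in> \<F> \<and> gdelta_in X (snd (p s)) \<and>
      K \<subseteq> snd (p s) \<and> s = fst (p s) \<inter> snd (p s)"
    by (rule bchoice[elim_format]) blast
  then have "fst ` p ` S \<subseteq> \<F>" "countable (fst ` p ` S)"
    using S by auto
  then obtain H where H: "H \<in> \<F>" "H \<subseteq> \<Inter>(fst ` p ` S)"
    by (rule stable_countable_interE[OF assms(1)])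
  \<comment> \<open>\<open>topspace X\<close> is added so that the intersection is over a nonempty family.\<close>
  define U where "U = \<Inter>(insert (topspace X) (snd ` p ` S))"
  have "gdelta_in X U"
    unfolding U_def using S p by (intro gdelta_in_Inter) auto
  moreover have "K \<subseteq> U"
    unfolding U_def using assms(2) p by blast
  ultimately have "H \<inter> U \<in> gdelta_trace X K \<F>"
    unfolding gdelta_trace_def using H(1) by blast
  moreover have "H \<inter> U \<subseteq> \<Inter>S"
  proof
    fix x assume "x \<in> H \<inter> U"
    then have "\<forall>s\<in>S. x \<in> fst (p s) \<and> x \<in> snd (p s)"
      unfolding U_def using H(2) by blast
    then show "x \<in> \<Inter>S"
      using p by blast
  qed
  ultimately show "\<exists>H\<in>gdelta_trace X K \<F>. H \<subseteq> \<Inter>S"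
    by blast
qed

lemma total_filter_base_gdelta_trace:
  assumes "compactin X K" "\<F> \<noteq> {}" "filter_base X (gdelta_trace X K \<F>)"
  shows "total_filter_base X (gdelta_trace X K \<F>)"
  unfolding total_filter_base_def
proof (intro conjI allI impI assms(3))
  fix \<H> assume \<H>: "filter_base X \<H> \<and> gdelta_trace X K \<F> \<subseteq> \<H>"
  obtain F where "F \<in> \<F>"
    using assms(2) by blast
  have "\<exists>H\<in>\<H>. H \<subseteq> U" if "openin X U" "K \<subseteq> U" for U
  proof -
    have "F \<inter> U \<in> gdelta_trace X K \<F>"
      unfolding gdelta_trace_def using \<open>F \<in> \<F>\<close> that open_imp_gdelta_in by blast
    then show ?thesis
      using \<H> by blast
  qed
  then have "ad X \<H> \<inter> K \<noteq> {}"
    using filter_base_adheres_in_compact[OF assms(1)] \<H> by blast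
  then show "ad X \<H> \<noteq> {}"
    by blast
qed

theorem mainTheorem2:
  fixes X :: "'a topology"
  assumes "alster_space X"
  shows "totally_lindelof X"
  unfolding totally_lindelof_def
proof (intro allI impI, elim conjE)
  fix \<F> assume \<F>: "filter_base X \<F>" "stable_countable_inter \<F>"
  obtain K where K: "compactin X K" "gdelta_meets_filter_base X K \<F>"
    using alster_space_gdelta_meets_filter_base[OF assms \<F>] .
  have K_sub: "K \<subseteq> topspace X"
    using K(1) by (rule compactin_subset_topspace)
  have "\<F> \<subseteq> gdelta_trace X K \<F>"
    by (rule subset_gdelta_trace[OF filter_baseD(2)[OF \<F>(1)] K_sub])
  moreover have "total_filter_base X (gdelta_trace X K \<F>)"
    by (rule total_filter_base_gdelta_trace[OF K(1) filter_baseD(1)[OF \<F>(1)]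
          filter_base_gdelta_trace[OF \<F>(1) K_sub K(2)]])
  moreover have "stable_countable_inter (gdelta_trace X K \<F>)"
    by (rule stable_countable_inter_gdelta_trace[OF \<F>(2) K_sub])
  ultimately show "\<exists>\<G>. \<F> \<subseteq> \<G> \<and> total_filter_base X \<G> \<and> stable_countable_inter \<G>"
    by blast
qed

end
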